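(* Let $m\ge 1$ and let $P_m(z)=\sum_{j=0}^m p_jz^j$ with $p_j=\frac{(2m-j)!}{j!(m-j)!}$. For every $\theta\in[-\pi,\pi]$, all zeros (in $z$) of the polynomial $M_m(\theta,z)=P_m(z)-e^{\mathrm{i}\theta}P_m(-z)$ are purely imaginary, i.e. lie on the imaginary axis $\{\operatorname{Re}z=0\}$.
   Context: $P_m(z)/P_m(-z)$ is the $(m,m)$-Padé approximant of $e^z$ (the stability function of the $m$-stage Gauss Runge–Kutta method). *)

theory Defs
  imports "HOL-Analysis.Analysis"
begin

definition pade_coeff :: "nat \<Rightarrow> nat \<Rightarrow> real" where
  "pade_coeff m j = fact (2*m - j) / (fact j * fact (m - j))"

definition P :: "nat \<Rightarrow> complex \<Rightarrow> complex" where
  "P m z = (\<Sum>j=0..m. complex_of_real (pade_coeff m j) * z ^ j)"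

definition M :: "nat \<Rightarrow> real \<Rightarrow> complex \<Rightarrow> complex" where
  "M m \<theta> z = P m z - exp (\<i> * complex_of_real \<theta>) * P m (- z)"

end

(*
  Split P_m(z) = A(z\<^sup>2) + z B(z\<^sup>2) into even and odd parts. The three-term recurrence
  P_(n+2) = (4n+6) P_(n+1) + z\<^sup>2 P_n exhibits A and B as continuants with the positive
  partial denominators 4i - 2, i.e. z B / A is a Stieltjes continued fraction. Such a fraction
  maps the right half-plane into itself, so Re (z B cnj A) > 0 for Re z > 0, which says exactly
  that |P_m(-z)| < |P_m(z)|. A zero of M_m forces |P_m(z)| = |P_m(-z)| because |e^(i\<theta>)| = 1,
  hence Re z = 0.
*)
theory Submission
  imports Defs "HOL-Computational_Algebra.Polynomial"
begin

text \<open>\<open>continuant b w i n\<close> is the numerator of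
  \<open>b i + w / (b (i+1) + w / (\<dots> + w / b (i+n-1)))\<close>.\<close>

fun continuant :: "(nat \<Rightarrow> 'a::comm_ring_1) \<Rightarrow> 'a \<Rightarrow> nat \<Rightarrow> nat \<Rightarrow> 'a" where
  "continuant b w i 0 = 1"
| "continuant b w i (Suc 0) = b i"
| "continuant b w i (Suc (Suc n)) =
     b i * continuant b w (Suc i) (Suc n) + w * continuant b w (Suc (Suc i)) n"

lemma continuant_Suc_Suc_last:
  "continuant b w i (Suc (Suc n)) =
     b (i + Suc n) * continuant b w i (Suc n) + w * continuant b w i n"
proof (induction b w i n rule: continuant.induct)
  case (3 b w i n)
  let ?K = "continuant b w"
  have "?K i (Suc (Suc (Suc (Suc n)))) =
      b i * ?K (Suc i) (Suc (Suc (Suc n))) + w * ?K (Suc (Suc i)) (Suc (Suc n))"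
    by (fact continuant.simps(3))
  also have "\<dots> =
      b (i + Suc (Suc (Suc n))) * (b i * ?K (Suc i) (Suc (Suc n)) + w * ?K (Suc (Suc i)) (Suc n))
      + w * (b i * ?K (Suc i) (Suc n) + w * ?K (Suc (Suc i)) n)"
    unfolding "3.IH" by (simp add: algebra_simps del: continuant.simps)
  also have "\<dots> =
      b (i + Suc (Suc (Suc n))) * ?K i (Suc (Suc (Suc n))) + w * ?K i (Suc (Suc n))"
    by (simp only: continuant.simps(3)[of b w i])
  finally show ?case .
qed (simp_all add: algebra_simps)

lemma cmod_diff_less_cmod_add_iff:
  fixes u v :: complex
  shows "cmod (u - v) < cmod (u + v) \<longleftrightarrow> 0 < Re (v * cnj u)"
proof -
  have "(cmod (u + v))\<^sup>2 - (cmod (u - v))\<^sup>2 = 4 * Re (v * cnj u)"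
    by (simp only: cmod_power2) (simp add: power2_eq_square algebra_simps)
  then show ?thesis
    by (smt (verit) norm_ge_zero power2_le_imp_le power_mono)
qed

text \<open>Equivalently \<open>Re (K i (n+1) / (z * K (i+1) n)) > 0\<close>; the induction step rests on
  \<open>Re (z X cnj (b X + z\<^sup>2 Y)) = b Re z \<bar>X\<bar>\<^sup>2 + \<bar>z\<bar>\<^sup>2 Re (z Y cnj X)\<close>.\<close>

lemma continuant_real_part_pos:
  fixes b :: "nat \<Rightarrow> real" and z :: complex
  assumes "0 < Re z" and "\<And>j. i \<le> j \<Longrightarrow> 0 < b j"
  defines "K \<equiv> continuant (\<lambda>j. complex_of_real (b j)) (z\<^sup>2)"
  shows "0 < Re (z * K (Suc i) n * cnj (K i (Suc n)))"
  using assms(2)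
proof (induction n arbitrary: i)
  case 0
  then show ?case using assms(1) by (simp add: K_def)
next
  case (Suc n)
  define X where "X = K (Suc i) (Suc n)"
  define Y where "Y = K (Suc (Suc i)) n"
  have "0 < Re (z * Y * cnj X)"
    using Suc.IH[of "Suc i"] Suc.prems by (simp add: X_def Y_def)
  then have "X \<noteq> 0" by auto
  have "K i (Suc (Suc n)) = of_real (b i) * X + z\<^sup>2 * Y"
    by (simp add: K_def X_def Y_def)
  moreover have "Re (z * X * cnj (of_real (b i) * X + z\<^sup>2 * Y)) =
      b i * Re z * (cmod X)\<^sup>2 + (cmod z)\<^sup>2 * Re (z * Y * cnj X)"
    by (simp only: cmod_power2) (simp add: power2_eq_square algebra_simps)
  moreover have "0 < b i * Re z * (cmod X)\<^sup>2"
    using Suc.prems assms(1) \<open>X \<noteq> 0\<close> by simp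
  ultimately show ?case
    using \<open>0 < Re (z * Y * cnj X)\<close> by (simp add: X_def add_pos_nonneg)
qed

definition pade_poly :: "nat \<Rightarrow> complex poly" where
  "pade_poly m = (\<Sum>j\<le>m. monom (complex_of_real (pade_coeff m j)) j)"

lemma poly_pade_poly: "poly (pade_poly m) z = P m z"
  by (simp add: pade_poly_def P_def poly_sum poly_monom atLeast0AtMost)

lemma coeff_pade_poly:
  "coeff (pade_poly m) j = (if j \<le> m then complex_of_real (pade_coeff m j) else 0)"
  by (simp add: pade_poly_def coeff_sum coeff_monom)

lemma coeff_pade_poly_add:
  "fact j * fact r * coeff (pade_poly (j + r)) j = fact (j + 2 * r)"
proof -
  have "2 * (j + r) - j = j + 2 * r" by simp
  then show ?thesis by (simp add: coeff_pade_poly pade_coeff_def)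
qed

definition pade_recurrence_coeff :: "nat \<Rightarrow> real" where
  "pade_recurrence_coeff i = 4 * real i - 2"

lemma pade_poly_recurrence:
  "pade_poly (Suc (Suc n)) =
     smult (of_real (pade_recurrence_coeff (Suc (Suc n)))) (pade_poly (Suc n))
       + monom 1 2 * pade_poly n"
proof (rule poly_eqI)
  fix j
  show "coeff (pade_poly (Suc (Suc n))) j =
      coeff (smult (of_real (pade_recurrence_coeff (Suc (Suc n)))) (pade_poly (Suc n))
        + monom 1 2 * pade_poly n) j"
  proof (cases "j \<le> Suc (Suc n)")
    case False
    then show ?thesis by (simp add: coeff_pade_poly coeff_monom_mult)
  next
    case True
    then obtain r where r: "Suc (Suc n) = j + r" using le_Suc_ex by blast
    txt \<open>All three coefficients are multiples of \<open>(n+r)! / (j! r!)\<close>, and the recurrence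
      reduces to \<open>(n+r+2)(n+r+1) = (4n+6) r + j(j-1)\<close>.\<close>
    define F :: complex where "F = fact (n + r)"
    define D :: complex where "D = fact j * fact r"
    have A: "D * coeff (pade_poly (Suc (Suc n))) j =
        (of_nat n + of_nat r + 2) * (of_nat n + of_nat r + 1) * F"
    proof -
      have idx: "j + 2 * r = Suc (Suc (n + r))" using r by simp
      have "D * coeff (pade_poly (j + r)) j = fact (Suc (Suc (n + r)))"
        using coeff_pade_poly_add[of j r] unfolding D_def idx .
      then show ?thesis by (simp add: r F_def algebra_simps)
    qed
    have B: "D * coeff (pade_poly (Suc n)) j = of_nat r * F"
    proof (cases r)
      case 0
      then show ?thesis using r by (simp add: coeff_pade_poly)
    next
      case (Suc r')
      have idx: "j + r' = Suc n" "j + 2 * r' = n + r" using r Suc by simp_all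
      have "fact j * fact r' * coeff (pade_poly (Suc n)) j = F"
        using coeff_pade_poly_add[of j r'] unfolding F_def idx .
      then show ?thesis by (simp add: Suc D_def algebra_simps)
    qed
    have C: "D * coeff (monom 1 2 * pade_poly n) j = of_nat j * (of_nat j - 1) * F"
    proof (cases "j < 2")
      case True
      then have "j = 0 \<or> j = 1" by auto
      then show ?thesis by (auto simp: coeff_monom_mult)
    next
      case False
      then obtain j' where j: "j = Suc (Suc j')" by (metis add_2_eq_Suc le_Suc_ex not_less)
      have idx: "j' + r = n" "j' + 2 * r = n + r" using r j by simp_all
      have "F = fact j' * fact r * coeff (pade_poly n) j'"
        using coeff_pade_poly_add[of j' r, symmetric] unfolding F_def idx .
      then show ?thesis unfolding coeff_monom_mult by (simp add: j D_def algebra_simps)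
    qed
    have j: "(of_nat j :: complex) = of_nat n + 2 - of_nat r"
      using arg_cong[OF r, of "of_nat :: nat \<Rightarrow> complex"] by (simp add: algebra_simps)
    have "D * coeff (pade_poly (Suc (Suc n))) j =
        D * (of_real (pade_recurrence_coeff (Suc (Suc n))) * coeff (pade_poly (Suc n)) j
          + coeff (monom 1 2 * pade_poly n) j)"
      unfolding distrib_left mult.left_commute[of D] A B C j
      by (simp add: pade_recurrence_coeff_def algebra_simps)
    moreover have "D \<noteq> 0" by (simp add: D_def)
    ultimately show ?thesis by simp
  qed
qed

lemma P_Suc_Suc:
  "P (Suc (Suc n)) z =
     of_real (pade_recurrence_coeff (Suc (Suc n))) * P (Suc n) z + z\<^sup>2 * P n z"
  using arg_cong[OF pade_poly_recurrence, of "\<lambda>p. poly p z"]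
  by (simp add: poly_pade_poly poly_monom)

lemma P_Suc_eq_continuant:
  fixes z :: complex
  defines "K \<equiv> continuant (\<lambda>i. complex_of_real (pade_recurrence_coeff i)) (z\<^sup>2)"
  shows "P (Suc m) z = K 1 (Suc m) + z * K 2 m"
proof -
  have P0: "P 0 z = 1" and P1: "P (Suc 0) z = 2 + z"
    by (simp_all add: P_def pade_coeff_def sum.atLeast0_atMost_Suc)
  show ?thesis
  proof (induction m rule: induct_nat_012)
    case 0
    then show ?case by (simp add: P1 K_def pade_recurrence_coeff_def)
  next
    case 1
    show ?case
      using P_Suc_Suc[of 0 z] by (simp add: P0 P1 K_def pade_recurrence_coeff_def algebra_simps)
  next
    case (ge2 n)
    define \<beta> where "\<beta> = complex_of_real (pade_recurrence_coeff (Suc (Suc (Suc n))))"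
    have "K 1 (Suc (Suc (Suc n))) = \<beta> * K 1 (Suc (Suc n)) + z\<^sup>2 * K 1 (Suc n)"
      "K 2 (Suc (Suc n)) = \<beta> * K 2 (Suc n) + z\<^sup>2 * K 2 n"
      unfolding K_def \<beta>_def continuant_Suc_Suc_last by simp_all
    then show ?case
      using P_Suc_Suc[of "Suc n" z] ge2 by (simp add: \<beta>_def algebra_simps)
  qed
qed

lemma cmod_P_uminus_less:
  assumes "0 < Re z" and "1 \<le> m"
  shows "cmod (P m (- z)) < cmod (P m z)"
proof -
  obtain n where m: "m = Suc n" using assms(2) by (cases m) auto
  define K where "K = continuant (\<lambda>i. complex_of_real (pade_recurrence_coeff i)) (z\<^sup>2)"
  have "P m z = K 1 (Suc n) + z * K 2 n" "P m (- z) = K 1 (Suc n) - z * K 2 n"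
    using P_Suc_eq_continuant[of n z] P_Suc_eq_continuant[of n "- z"]
    by (simp_all add: m K_def)
  moreover have "0 < Re (z * K 2 n * cnj (K 1 (Suc n)))"
    using continuant_real_part_pos[of z 1 pade_recurrence_coeff n] assms(1)
    by (simp add: K_def pade_recurrence_coeff_def numeral_2_eq_2)
  ultimately show ?thesis
    by (simp add: cmod_diff_less_cmod_add_iff mult.assoc)
qed

theorem proposition2:
  fixes m :: nat and \<theta> :: real and z :: complex
  assumes "m \<ge> 1" and "-pi \<le> \<theta>" and "\<theta> \<le> pi"
    and "M m \<theta> z = 0"
  shows "Re z = 0"
proof -
  have "P m z = exp (\<i> * complex_of_real \<theta>) * P m (- z)"
    using assms(4) by (simp add: M_def)
  then have "cmod (P m z) = cmod (P m (- z))"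
    by (simp add: norm_mult)
  moreover have "cmod (P m (- z)) < cmod (P m z)" if "0 < Re z"
    using cmod_P_uminus_less[OF that assms(1)] .
  moreover have "cmod (P m z) < cmod (P m (- z))" if "Re z < 0"
    using cmod_P_uminus_less[of "- z" m] that assms(1) by simp
  ultimately show ?thesis by force
qed

end
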